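(* Let $q\in(0,1]$. Then $\mathrm{F\o l}^{\mathrm{inn}}(R(SO_q(3)))=1-q^4$ and $\mathrm{F\o l}(R(SO_q(3)))=q^{-4}-q^4$.
   Context: $R(SO_q(3))$ is the fusion algebra with irreducible objects $I=\mathbb{Z}_+$, unit $0$, trivial involution, product $m\cdot n=\sum_{k=|m-n|}^{m+n}k$ (all integers in that range), and dimension $d(n)=[2n+1]_q$, where $[x]_q=\frac{q^{-x}-q^x}{q^{-1}-q}$ for $0<q<1$ and $[x]_1=x$. $\mathrm{supp}(r)$ is the set of elements of $I$ with nonzero coefficient in $r$. For $A\subseteq I$, $|A|=\sum_{\beta\in A}d(\beta)^2$, $A^c=I\setminus A$. A finite generating set is a finite $X\subseteq I$ such that every element of $I$ lies in $\mathrm{supp}$ of some product of elements of $X$. For finite $X,A$: $\partial_X(A)=\{\beta\in A:\exists x\in X,\ \mathrm{supp}(\beta x)\not\subseteq A\}\cup\{\beta\in A^c:\exists x\in X,\ \mathrm{supp}(\beta x)\not\subseteq A^c\}$, $\partial^{\mathrm{inn}}_X(A)=\{\beta\in A:\exists x\in X,\ \mathrm{supp}(\beta x)\not\subseteq A\}$. $\mathrm{F\o l}_X=\inf_A|\partial_XA|/|A|$, $\mathrm{F\o l}^{\mathrm{inn}}_X=\inf_A|\partial^{\mathrm{inn}}_XA|/|A|$ over nonempty finite $A$; $\mathrm{F\o l}$ and $\mathrm{F\o l}^{\mathrm{inn}}$ are their infima over finite generating sets $X$. *)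

theory Defs
  imports Complex_Main
begin

text \<open>The fusion algebra R(SO_q(3)): irreducibles are the naturals, unit 0,
  fusion rule m*n = sum of k for |m-n| <= k <= m+n.\<close>

definition qnum :: "real \<Rightarrow> real \<Rightarrow> real" where
  "qnum q x = (if q = 1 then x else (q powr (-x) - q powr x) / (q powr (-1) - q))"

definition dimq :: "real \<Rightarrow> nat \<Rightarrow> real" where
  "dimq q n = qnum q (2 * real n + 1)"

definition fsupp :: "nat \<Rightarrow> nat \<Rightarrow> nat set" where
  "fsupp m n = {k. nat \<bar>int m - int n\<bar> \<le> k \<and> k \<le> m + n}"

text \<open>Support of the product x1 * ... * xk of a list of irreducibles
  (all fusion coefficients are nonnegative, so supports add up).\<close>
fun prodsupp :: "nat list \<Rightarrow> nat set" where
  "prodsupp [] = {0}"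
| "prodsupp (x # xs) = (\<Union>\<beta>\<in>prodsupp xs. fsupp \<beta> x)"

definition generating :: "nat set \<Rightarrow> bool" where
  "generating X \<longleftrightarrow> finite X \<and>
     (\<forall>\<alpha>. \<exists>xs. xs \<noteq> [] \<and> set xs \<subseteq> X \<and> \<alpha> \<in> prodsupp xs)"

definition wsize :: "real \<Rightarrow> nat set \<Rightarrow> real" where
  "wsize q A = (\<Sum>\<beta>\<in>A. (dimq q \<beta>)^2)"

definition bdry_inn :: "nat set \<Rightarrow> nat set \<Rightarrow> nat set" where
  "bdry_inn X A = {\<beta>\<in>A. \<exists>x\<in>X. \<not> fsupp \<beta> x \<subseteq> A}"

definition bdry :: "nat set \<Rightarrow> nat set \<Rightarrow> nat set" where
  "bdry X A = {\<beta>\<in>A. \<exists>x\<in>X. \<not> fsupp \<beta> x \<subseteq> A}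
            \<union> {\<beta>\<in>-A. \<exists>x\<in>X. \<not> fsupp \<beta> x \<subseteq> -A}"

definition FolX :: "real \<Rightarrow> nat set \<Rightarrow> real" where
  "FolX q X = Inf {wsize q (bdry X A) / wsize q A | A. finite A \<and> A \<noteq> {}}"

definition FolX_inn :: "real \<Rightarrow> nat set \<Rightarrow> real" where
  "FolX_inn q X = Inf {wsize q (bdry_inn X A) / wsize q A | A. finite A \<and> A \<noteq> {}}"

definition Fol :: "real \<Rightarrow> real" where
  "Fol q = Inf {FolX q X | X. generating X}"

definition Fol_inn :: "real \<Rightarrow> real" where
  "Fol_inn q = Inf {FolX_inn q X | X. generating X}"

end

theory Submission
  imports Defs
begin

text \<open>
  Every generating set contains some x > 0. For finite A, the points b of A with b + x outside A
  lie in the inner boundary. Since [2k+1]_q \<le> q^2 [2k+3]_q, translating the remaining points of A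
  by x back into A shows that they carry at most the fraction q^4 of |A|, so the inner boundary
  weighs at least (1 - q^4) |A|. The translates b + x lie in the outer boundary and are heavier by
  a factor of at least q^(-4), which gives (q^(-4) - q^4) |A| for the full boundary.

  Conversely, for X = {1} and A = {0..n} the two boundaries lie in {n} and {n, n+1}. The recurrence
  q^2 [2k+3]_q = [2k+1]_q + q^(2k+2) (1 + q^2) shows that their relative weights exceed these
  bounds only by multiples of the average (\<Sum>k\<le>n. [2k+1]_q) / |A| \<le> 1/(n+1).
\<close>

lemma inverse_minus_self_neq_0:
  fixes q :: real
  assumes "0 < q" "q \<noteq> 1"
  shows "inverse q - q \<noteq> 0"
  using assms by (auto simp: field_simps power2_eq_1_iff simp flip: power2_eq_square)

lemma dimq_eq_q_ne_1:
  assumes "0 < q" "q \<noteq> 1"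
  shows "dimq q k = (inverse (q ^ (2*k+1)) - q ^ (2*k+1)) / (inverse q - q)"
proof -
  have "2 * real k + 1 = real (2*k+1)"
    by simp
  then have pow: "q powr (2 * real k + 1) = q ^ (2*k+1)"
    by (simp only: powr_realpow[OF assms(1)])
  have inv: "q powr (-1) = inverse q"
    using assms(1) by (simp add: powr_minus)
  show ?thesis
    unfolding dimq_def qnum_def if_not_P[OF assms(2)] powr_minus[of q "2 * real k + 1"] pow inv ..
qed

lemma dimq_Suc:
  assumes "0 < q"
  shows "dimq q (Suc k) = dimq q k + q ^ (2*k+2) + inverse (q ^ (2*k+2))"
proof (cases "q = 1")
  case True
  then show ?thesis by (simp add: dimq_def qnum_def)
next
  case False
  define a where "a = q ^ (2*k+1)"
  have "a > 0" using assms by (simp add: a_def)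
  have D: "inverse q - q \<noteq> 0"
    using inverse_minus_self_neq_0[OF assms False] .
  have pow: "q ^ (2*k+1) = a" "q ^ (2 * Suc k + 1) = a*q*q"
    by (simp_all add: a_def)
  have "dimq q (Suc k) - dimq q k = (inverse (a*q*q) - a*q*q - (inverse a - a)) / (inverse q - q)"
    unfolding dimq_eq_q_ne_1[OF assms False] pow by (simp add: diff_divide_distrib)
  also have "\<dots> = a*q + inverse (a*q)"
    using assms \<open>a > 0\<close> D by (simp add: field_simps)
  also have "a*q = q ^ (2*k+2)"
    by (simp add: a_def)
  finally show ?thesis
    by simp
qed

lemma q2_dimq_Suc:
  assumes "0 < q"
  shows "q\<^sup>2 * dimq q (Suc k) = dimq q k + q ^ (2*k+2) * (1 + q\<^sup>2)"
proof (cases "q = 1")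
  case True
  then show ?thesis by (simp add: dimq_def qnum_def)
next
  case False
  define a where "a = q ^ (2*k+1)"
  have "a > 0" using assms by (simp add: a_def)
  have D: "inverse q - q \<noteq> 0"
    using inverse_minus_self_neq_0[OF assms False] .
  have pow: "q ^ (2*k+1) = a" "q ^ (2 * Suc k + 1) = a*q*q"
    by (simp_all add: a_def)
  have "q\<^sup>2 * dimq q (Suc k) - dimq q k
      = (q * q * (inverse (a*q*q) - a*q*q) - (inverse a - a)) / (inverse q - q)"
    unfolding dimq_eq_q_ne_1[OF assms False] pow
    by (simp add: diff_divide_distrib right_diff_distrib power2_eq_square)
  also have "\<dots> = a*q * (1 + q*q)"
    using assms \<open>a > 0\<close> D by (simp add: field_simps)
  also have "a*q = q ^ (2*k+2)"
    by (simp add: a_def)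
  finally show ?thesis
    by (simp add: power2_eq_square)
qed

lemma dimq_0:
  assumes "0 < q"
  shows "dimq q 0 = 1"
proof (cases "q = 1")
  case True
  then show ?thesis by (simp add: dimq_def qnum_def)
next
  case False
  then show ?thesis
    using inverse_minus_self_neq_0[OF assms False] by (simp add: dimq_eq_q_ne_1[OF assms False])
qed

lemma mem_fsupp_iff: "k \<in> fsupp m n \<longleftrightarrow> m \<le> k + n \<and> n \<le> k + m \<and> k \<le> m + n"
  by (auto simp: fsupp_def)

lemma mem_fsupp_commute: "k \<in> fsupp m n \<longleftrightarrow> m \<in> fsupp k n"
  by (auto simp: mem_fsupp_iff)

lemma add_mem_fsupp: "m + n \<in> fsupp m n"
  by (simp add: mem_fsupp_iff)

lemma mem_fsupp_add: "m \<in> fsupp (m + n) n"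
  by (simp add: mem_fsupp_iff)

lemma finite_fsupp: "finite (fsupp m n)"
  by (rule finite_subset[of _ "{..m + n}"]) (auto simp: mem_fsupp_iff)

lemma finite_bdry:
  assumes "finite X" "finite A"
  shows "finite (bdry X A)"
proof (rule finite_subset)
  show "bdry X A \<subseteq> A \<union> (\<Union>k\<in>A. \<Union>x\<in>X. fsupp k x)"
    unfolding bdry_def by (auto simp: mem_fsupp_commute)
  show "finite (A \<union> (\<Union>k\<in>A. \<Union>x\<in>X. fsupp k x))"
    using assms by (simp add: finite_fsupp)
qed

lemma prodsupp_subset_0: "set xs \<subseteq> {0} \<Longrightarrow> prodsupp xs \<subseteq> {0}"
  by (induction xs) (auto simp: mem_fsupp_iff)

lemma generating_imp_ex_pos:
  assumes "generating X"
  shows "\<exists>x\<in>X. 0 < x"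
proof (rule ccontr)
  assume "\<not> (\<exists>x\<in>X. 0 < x)"
  then have "X \<subseteq> {0}"
    by auto
  moreover obtain xs where "set xs \<subseteq> X" "1 \<in> prodsupp xs"
    using assms unfolding generating_def by blast
  ultimately show False
    using prodsupp_subset_0[of xs] by auto
qed

lemma mem_prodsupp_replicate_1: "n \<in> prodsupp (replicate n 1)"
proof (induction n)
  case (Suc n)
  moreover have "Suc n \<in> fsupp n 1"
    by (simp add: mem_fsupp_iff)
  ultimately show ?case
    by auto
qed simp

lemma generating_1: "generating {1}"
  unfolding generating_def
proof (intro conjI allI)
  fix n :: nat
  have "0 \<in> prodsupp [1, 1]"
    by (auto simp: mem_fsupp_iff)
  then show "\<exists>xs. xs \<noteq> [] \<and> set xs \<subseteq> {1} \<and> n \<in> prodsupp xs"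
  proof (cases "n = 0")
    case True
    then show ?thesis
      using \<open>0 \<in> prodsupp [1, 1]\<close> by (intro exI[of _ "[1, 1]"]) simp
  next
    case False
    then show ?thesis
      using mem_prodsupp_replicate_1[of n] by (intro exI[of _ "replicate n 1"]) simp
  qed
qed simp

lemma bdry_inn_1_atMost: "bdry_inn {1} {..n} \<subseteq> {n}"
  by (auto simp: bdry_inn_def mem_fsupp_iff subset_iff)

lemma bdry_1_atMost: "bdry {1} {..n} \<subseteq> {n, Suc n}"
  by (auto simp: bdry_def mem_fsupp_iff subset_iff)

lemma exits_subset_bdry_inn: "x \<in> X \<Longrightarrow> {b \<in> A. b + x \<notin> A} \<subseteq> bdry_inn X A"
  unfolding bdry_inn_def using add_mem_fsupp by blast

lemma exit_targets_subset_bdry: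
  "x \<in> X \<Longrightarrow> (\<lambda>b. b + x) ` {b \<in> A. b + x \<notin> A} \<subseteq> bdry X A - A"
  unfolding bdry_def using mem_fsupp_add by blast

lemma sum_exits_ge:
  fixes f :: "nat \<Rightarrow> real"
  assumes "finite A" "\<And>b. 0 \<le> f b" "\<And>b. f b \<le> r * f (b + x)" "0 \<le> r"
  shows "(1 - r) * sum f A \<le> sum f {b \<in> A. b + x \<notin> A}"
proof -
  let ?R = "{b \<in> A. b + x \<notin> A}" and ?S = "{b \<in> A. b + x \<in> A}"
  have "sum f A = sum f ?R + sum f ?S"
    using assms(1) by (subst sum.union_disjoint[symmetric]) (auto intro: sum.cong)
  moreover have "sum f ?S \<le> (\<Sum>b\<in>?S. r * f (b + x))"
    by (rule sum_mono) (rule assms(3))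
  moreover have "(\<Sum>b\<in>?S. r * f (b + x)) = r * sum f ((\<lambda>b. b + x) ` ?S)"
    by (simp add: sum_distrib_left sum.reindex)
  moreover have "r * sum f ((\<lambda>b. b + x) ` ?S) \<le> r * sum f A"
    using assms(1,2,4) by (intro mult_left_mono sum_mono2) auto
  ultimately show ?thesis
    by (simp add: left_diff_distrib)
qed

lemma cInf_le_of_approx:
  fixes S :: "real set"
  assumes "bdd_below S" "\<And>n. \<exists>s\<in>S. s \<le> L + c / real (Suc n)"
  shows "Inf S \<le> L"
proof (rule LIMSEQ_le_const)
  show "(\<lambda>n. L + c / real (Suc n)) \<longlonglongrightarrow> L"
    using tendsto_add[OF tendsto_const[of L] LIMSEQ_Suc[OF lim_const_over_n[of c]]] by simp
  show "\<exists>N. \<forall>n\<ge>N. Inf S \<le> L + c / real (Suc n)"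
    using assms cInf_lower order.trans by blast
qed

lemma Inf_generating_eqI:
  fixes F :: "nat set \<Rightarrow> real"
  assumes "\<And>X. generating X \<Longrightarrow> L \<le> F X" "F {1} = L"
  shows "Inf {F X | X. generating X} = L"
  by (rule cInf_eq_minimum) (use assms generating_1 in auto)

lemma wsize_nonneg: "0 \<le> wsize q A"
  by (simp add: wsize_def sum_nonneg)

lemma bdd_below_wsize_ratios: "bdd_below {wsize q (B A) / wsize q A | A. P A}"
  by (rule bdd_belowI[of _ 0]) (auto simp: wsize_nonneg)

context
  fixes q :: real
  assumes q_pos: "0 < q"
begin

lemma dimq_Suc_ge: "dimq q k + 2 \<le> dimq q (Suc k)"
proof -
  define t where "t = q ^ (2*k+2)"
  have "t > 0" using q_pos by (simp add: t_def)
  then have "t + inverse t - 2 = (t - 1)\<^sup>2 / t"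
    by (simp add: field_simps power2_eq_square)
  moreover have "0 \<le> (t - 1)\<^sup>2 / t"
    using \<open>t > 0\<close> by simp
  ultimately have "2 \<le> t + inverse t"
    by linarith
  then show ?thesis using dimq_Suc[OF q_pos, of k] by (simp add: t_def)
qed

lemma dimq_ge: "2 * real k + 1 \<le> dimq q k"
proof (induction k)
  case 0
  then show ?case using dimq_0[OF q_pos] by simp
next
  case (Suc k)
  then show ?case using dimq_Suc_ge[of k] by simp
qed

lemma dimq_pos: "0 < dimq q k"
  using dimq_ge[of k] by linarith

lemma wsize_pos:
  assumes "finite A" "A \<noteq> {}"
  shows "0 < wsize q A"
proof -
  have "0 < (dimq q k)\<^sup>2" for k
    using dimq_pos[of k] by simp
  then show ?thesis
    unfolding wsize_def using assms by (intro sum_pos)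
qed

lemma dimq_mono: "k \<le> m \<Longrightarrow> dimq q k \<le> dimq q m"
proof (rule lift_Suc_mono_le[of "dimq q"])
  show "dimq q n \<le> dimq q (Suc n)" for n
    using dimq_Suc_ge[of n] by linarith
qed

lemma dimq_le_q2_dimq_Suc: "dimq q k \<le> q\<^sup>2 * dimq q (Suc k)"
proof -
  have "0 \<le> q ^ (2*k+2) * (1 + q\<^sup>2)"
    using q_pos by simp
  then show ?thesis
    using q2_dimq_Suc[OF q_pos, of k] by linarith
qed

lemma dimq_sq_le_q4_dimq_add_sq:
  assumes "0 < x"
  shows "(dimq q k)\<^sup>2 \<le> q ^ 4 * (dimq q (k + x))\<^sup>2"
proof -
  have "dimq q (Suc k) \<le> dimq q (k + x)"
    using assms by (intro dimq_mono) simp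
  then have "dimq q k \<le> q\<^sup>2 * dimq q (k + x)"
    using dimq_le_q2_dimq_Suc[of k] by (meson mult_left_mono order.trans zero_le_power2)
  then have "(dimq q k)\<^sup>2 \<le> (q\<^sup>2 * dimq q (k + x))\<^sup>2"
    using dimq_pos[of k] by (intro power_mono) auto
  then show ?thesis
    by (simp add: power_mult_distrib flip: power_mult)
qed

lemma sum_dimq_le_wsize: "real (Suc n) * (\<Sum>k\<le>n. dimq q k) \<le> wsize q {..n}"
proof (induction n)
  case 0
  then show ?case by (simp add: wsize_def dimq_0[OF q_pos])
next
  case (Suc n)
  let ?T = "\<Sum>k\<le>n. dimq q k" and ?d = "dimq q (Suc n)"
  have "?T \<le> real (Suc n) * ?d"
    using sum_bounded_above[of "{..n}" "dimq q" ?d] dimq_mono by simp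
  moreover have "(2 * real n + 3) * ?d \<le> ?d * ?d"
    using dimq_ge[of "Suc n"] dimq_pos[of "Suc n"] by (intro mult_right_mono) auto
  ultimately show ?case
    using Suc.IH by (simp add: wsize_def algebra_simps power2_eq_square)
qed

lemma sum_dimq_le_wsize_div: "(\<Sum>k\<le>n. dimq q k) \<le> wsize q {..n} / real (Suc n)"
  using sum_dimq_le_wsize[of n] by (simp add: field_simps)

lemma q2_dimq_Suc_le:
  assumes "q \<le> 1"
  shows "q\<^sup>2 * dimq q (Suc k) \<le> dimq q k + 2"
proof -
  have "q ^ (2*k+2) \<le> 1" "q\<^sup>2 \<le> 1"
    using q_pos assms by (simp_all only: power_le_one less_imp_le)
  then have "q ^ (2*k+2) * (1 + q\<^sup>2) \<le> 1 * 2"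
    by (intro mult_mono) auto
  then show ?thesis
    using q2_dimq_Suc[OF q_pos, of k] by linarith
qed

lemma dimq_sq_le_wsize_sum:
  assumes "q \<le> 1"
  shows "(dimq q n)\<^sup>2 \<le> (1 - q ^ 4) * wsize q {..n} + 4 * (\<Sum>k\<le>n. dimq q k)"
proof (induction n)
  case 0
  have "q ^ 4 \<le> 1"
    using q_pos assms by (simp add: power_le_one)
  then show ?case
    by (simp add: wsize_def dimq_0[OF q_pos])
next
  case (Suc n)
  let ?d = "dimq q (Suc n)" and ?b = "dimq q n"
  have gap: "0 \<le> q\<^sup>2 * ?d - ?b" "q\<^sup>2 * ?d - ?b \<le> 2"
    using dimq_le_q2_dimq_Suc[of n] q2_dimq_Suc_le[OF assms, of n] by auto
  have "q\<^sup>2 * ?d \<le> ?d"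
    using dimq_pos[of "Suc n"] q_pos assms by (simp add: mult_left_le_one_le power_le_one)
  then have "(q\<^sup>2 * ?d - ?b) * (q\<^sup>2 * ?d + ?b) \<le> 2 * (2 * ?d)"
    using gap dimq_pos[of n] by (intro mult_mono) auto
  moreover have "(q\<^sup>2 * ?d - ?b) * (q\<^sup>2 * ?d + ?b) = q ^ 4 * ?d\<^sup>2 - ?b\<^sup>2"
    by (simp add: algebra_simps power2_eq_square power4_eq_xxxx)
  ultimately have "q ^ 4 * ?d\<^sup>2 - ?b\<^sup>2 \<le> 4 * ?d"
    by simp
  then show ?case
    using Suc.IH by (simp add: wsize_def algebra_simps)
qed

lemma dimq_sq_le_wsize:
  assumes "q \<le> 1"
  shows "(dimq q n)\<^sup>2 \<le> (1 - q ^ 4 + 4 / real (Suc n)) * wsize q {..n}"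
proof -
  have "(dimq q n)\<^sup>2 \<le> (1 - q ^ 4) * wsize q {..n} + 4 * (\<Sum>k\<le>n. dimq q k)"
    using dimq_sq_le_wsize_sum[OF assms] .
  also have "\<dots> \<le> (1 - q ^ 4) * wsize q {..n} + 4 * (wsize q {..n} / real (Suc n))"
    using sum_dimq_le_wsize_div[of n] by simp
  finally show ?thesis
    by (simp add: algebra_simps)
qed

lemma dimq_Suc_sq_le:
  assumes "q \<le> 1"
  shows "(dimq q (Suc n))\<^sup>2 \<le> ((dimq q n)\<^sup>2 + 8 * (\<Sum>k\<le>n. dimq q k)) / q ^ 4"
proof -
  have "(q\<^sup>2 * dimq q (Suc n))\<^sup>2 \<le> (dimq q n + 2)\<^sup>2"
    using q2_dimq_Suc_le[OF assms, of n] dimq_le_q2_dimq_Suc[of n] dimq_pos[of n]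
    by (intro power_mono) auto
  also have "\<dots> \<le> (dimq q n)\<^sup>2 + 8 * (\<Sum>k\<le>n. dimq q k)"
    using dimq_ge[of n] member_le_sum[of n "{..n}" "dimq q"] dimq_pos
    by (simp add: power2_eq_square algebra_simps less_imp_le)
  finally show ?thesis
    using q_pos by (simp add: field_simps flip: power_mult)
qed

lemma dimq_sq_add_dimq_Suc_sq_le_wsize:
  assumes "q \<le> 1"
  shows "(dimq q n)\<^sup>2 + (dimq q (Suc n))\<^sup>2
    \<le> (1 / q ^ 4 - q ^ 4 + (4 + 12 / q ^ 4) / real (Suc n)) * wsize q {..n}"
proof -
  let ?b = "dimq q n" and ?T = "\<Sum>k\<le>n. dimq q k" and ?S = "wsize q {..n}"
  have "?b\<^sup>2 + (dimq q (Suc n))\<^sup>2 \<le> (1 + 1 / q ^ 4) * ?b\<^sup>2 + 8 / q ^ 4 * ?T"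
    using dimq_Suc_sq_le[OF assms, of n] by (simp add: add_divide_distrib algebra_simps)
  also have "\<dots> \<le> (1 + 1 / q ^ 4) * ((1 - q ^ 4) * ?S + 4 * ?T) + 8 / q ^ 4 * ?T"
    using dimq_sq_le_wsize_sum[OF assms, of n] q_pos by (intro add_right_mono mult_left_mono) auto
  also have "\<dots> = (1 / q ^ 4 - q ^ 4) * ?S + (4 + 12 / q ^ 4) * ?T"
    using q_pos by (simp add: field_simps)
  also have "\<dots> \<le> (1 / q ^ 4 - q ^ 4) * ?S + (4 + 12 / q ^ 4) * (?S / real (Suc n))"
    using sum_dimq_le_wsize_div[of n] q_pos by (intro add_left_mono mult_left_mono) auto
  also have "\<dots> = (1 / q ^ 4 - q ^ 4 + (4 + 12 / q ^ 4) / real (Suc n)) * ?S"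
    by (simp add: ring_distribs)
  finally show ?thesis .
qed

lemma wsize_exits_ge:
  assumes "finite A" "0 < x"
  shows "(1 - q ^ 4) * wsize q A \<le> wsize q {b \<in> A. b + x \<notin> A}"
  unfolding wsize_def
  using dimq_sq_le_q4_dimq_add_sq[OF assms(2)] assms(1) by (intro sum_exits_ge) auto

lemma wsize_bdry_inn_ge:
  assumes "finite A" "x \<in> X" "0 < x"
  shows "(1 - q ^ 4) * wsize q A \<le> wsize q (bdry_inn X A)"
proof -
  have "(1 - q ^ 4) * wsize q A \<le> wsize q {b \<in> A. b + x \<notin> A}"
    using wsize_exits_ge assms by blast
  also have "\<dots> \<le> wsize q (bdry_inn X A)"
    unfolding wsize_def using exits_subset_bdry_inn[OF assms(2)] assms(1)
    by (intro sum_mono2) (auto simp: bdry_inn_def)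
  finally show ?thesis .
qed

lemma wsize_bdry_ge:
  assumes "finite X" "finite A" "x \<in> X" "0 < x"
  shows "(1 / q ^ 4 - q ^ 4) * wsize q A \<le> wsize q (bdry X A)"
proof -
  let ?R = "{b \<in> A. b + x \<notin> A}"
  have fin: "finite (bdry X A)"
    using finite_bdry[OF assms(1,2)] .
  have "wsize q ?R \<le> (\<Sum>b\<in>?R. q ^ 4 * (dimq q (b + x))\<^sup>2)"
    unfolding wsize_def by (intro sum_mono dimq_sq_le_q4_dimq_add_sq[OF assms(4)])
  also have "\<dots> = q ^ 4 * wsize q ((\<lambda>b. b + x) ` ?R)"
    by (simp add: wsize_def sum_distrib_left sum.reindex)
  finally have target: "wsize q ?R / q ^ 4 \<le> wsize q ((\<lambda>b. b + x) ` ?R)"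
    using q_pos by (simp add: divide_le_eq mult.commute)
  have "(1 / q ^ 4 - q ^ 4) * wsize q A = (1 + 1 / q ^ 4) * ((1 - q ^ 4) * wsize q A)"
    using q_pos by (simp add: field_simps)
  also have "\<dots> \<le> (1 + 1 / q ^ 4) * wsize q ?R"
    using wsize_exits_ge[OF assms(2,4)] q_pos by (intro mult_left_mono) auto
  also have "\<dots> \<le> wsize q ?R + wsize q ((\<lambda>b. b + x) ` ?R)"
    using target by (simp add: algebra_simps)
  also have "\<dots> \<le> wsize q (bdry X A \<inter> A) + wsize q (bdry X A - A)"
    unfolding wsize_def
    using fin exits_subset_bdry_inn[OF assms(3)] exit_targets_subset_bdry[OF assms(3)]
    by (intro add_mono sum_mono2) (auto simp: bdry_inn_def bdry_def)
  also have "\<dots> = wsize q (bdry X A)"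
    unfolding wsize_def using fin by (rule sum.Int_Diff[symmetric])
  finally show ?thesis .
qed

lemma FolX_inn_ge:
  assumes "generating X"
  shows "1 - q ^ 4 \<le> FolX_inn q X"
  unfolding FolX_inn_def
proof (rule cInf_greatest)
  obtain x where "x \<in> X" "0 < x"
    using generating_imp_ex_pos[OF assms] by blast
  fix s
  assume "s \<in> {wsize q (bdry_inn X A) / wsize q A | A. finite A \<and> A \<noteq> {}}"
  then obtain A where "finite A" "A \<noteq> {}" "s = wsize q (bdry_inn X A) / wsize q A"
    by blast
  then show "1 - q ^ 4 \<le> s"
    using wsize_bdry_inn_ge[OF \<open>finite A\<close> \<open>x \<in> X\<close> \<open>0 < x\<close>] wsize_pos
    by (simp add: pos_le_divide_eq)
qed blast

lemma FolX_ge: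
  assumes "generating X"
  shows "1 / q ^ 4 - q ^ 4 \<le> FolX q X"
  unfolding FolX_def
proof (rule cInf_greatest)
  obtain x where "x \<in> X" "0 < x"
    using generating_imp_ex_pos[OF assms] by blast
  fix s
  assume "s \<in> {wsize q (bdry X A) / wsize q A | A. finite A \<and> A \<noteq> {}}"
  then obtain A where "finite A" "A \<noteq> {}" "s = wsize q (bdry X A) / wsize q A"
    by blast
  moreover have "finite X"
    using assms by (simp add: generating_def)
  ultimately show "1 / q ^ 4 - q ^ 4 \<le> s"
    using wsize_bdry_ge[OF _ \<open>finite A\<close> \<open>x \<in> X\<close> \<open>0 < x\<close>] wsize_pos
    by (simp add: pos_le_divide_eq)
qed blast

lemma FolX_inn_1:
  assumes "q \<le> 1"
  shows "FolX_inn q {1} = 1 - q ^ 4"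
proof (rule antisym)
  show "FolX_inn q {1} \<le> 1 - q ^ 4"
    unfolding FolX_inn_def
  proof (rule cInf_le_of_approx[OF bdd_below_wsize_ratios])
    fix n
    have "wsize q (bdry_inn {1} {..n}) \<le> wsize q {n}"
      unfolding wsize_def using bdry_inn_1_atMost by (intro sum_mono2) auto
    also have "\<dots> \<le> (1 - q ^ 4 + 4 / real (Suc n)) * wsize q {..n}"
      using dimq_sq_le_wsize[OF assms] by (simp add: wsize_def)
    finally have "wsize q (bdry_inn {1} {..n}) / wsize q {..n} \<le> 1 - q ^ 4 + 4 / real (Suc n)"
      using wsize_pos[of "{..n}"] by (simp add: pos_divide_le_eq)
    then show "\<exists>s\<in>{wsize q (bdry_inn {1} A) / wsize q A | A. finite A \<and> A \<noteq> {}}.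
        s \<le> 1 - q ^ 4 + 4 / real (Suc n)"
      by force
  qed
  show "1 - q ^ 4 \<le> FolX_inn q {1}"
    using FolX_inn_ge[OF generating_1] .
qed

lemma FolX_1:
  assumes "q \<le> 1"
  shows "FolX q {1} = 1 / q ^ 4 - q ^ 4"
proof (rule antisym)
  show "FolX q {1} \<le> 1 / q ^ 4 - q ^ 4"
    unfolding FolX_def
  proof (rule cInf_le_of_approx[OF bdd_below_wsize_ratios])
    fix n
    have "wsize q (bdry {1} {..n}) \<le> wsize q {n, Suc n}"
      unfolding wsize_def using bdry_1_atMost by (intro sum_mono2) auto
    also have "\<dots> \<le> (1 / q ^ 4 - q ^ 4 + (4 + 12 / q ^ 4) / real (Suc n)) * wsize q {..n}"
      using dimq_sq_add_dimq_Suc_sq_le_wsize[OF assms] by (simp add: wsize_def)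
    finally have "wsize q (bdry {1} {..n}) / wsize q {..n}
        \<le> 1 / q ^ 4 - q ^ 4 + (4 + 12 / q ^ 4) / real (Suc n)"
      using wsize_pos[of "{..n}"] by (simp add: pos_divide_le_eq)
    then show "\<exists>s\<in>{wsize q (bdry {1} A) / wsize q A | A. finite A \<and> A \<noteq> {}}.
        s \<le> 1 / q ^ 4 - q ^ 4 + (4 + 12 / q ^ 4) / real (Suc n)"
      by force
  qed
  show "1 / q ^ 4 - q ^ 4 \<le> FolX q {1}"
    using FolX_ge[OF generating_1] .
qed

end

theorem proposition5p3:
  fixes q :: real
  assumes "0 < q" and "q \<le> 1"
  shows "Fol_inn q = 1 - q ^ 4 \<and> Fol q = q powr (-4) - q ^ 4"
proof -
  have "Fol_inn q = 1 - q ^ 4"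
    unfolding Fol_inn_def
    using FolX_inn_ge[OF assms(1)] FolX_inn_1[OF assms] by (rule Inf_generating_eqI)
  moreover have "Fol q = 1 / q ^ 4 - q ^ 4"
    unfolding Fol_def
    using FolX_ge[OF assms(1)] FolX_1[OF assms] by (rule Inf_generating_eqI)
  moreover have "q powr (-4) = 1 / q ^ 4"
    using assms(1) by (simp add: powr_minus_divide)
  ultimately show ?thesis
    by simp
qed

end
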